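(* Let $p>2$ be prime and let $\mathcal{C}$ be a $\mathbb{Z}_p\mathbb{Z}_{p^2}$-additive code, i.e. a subgroup of $\mathbb{Z}_p^\alpha\times\mathbb{Z}_{p^2}^\beta$. Then the code $C=\Phi(\mathcal{C})\subseteq\mathbb{Z}_p^{\alpha+p\beta}$ is linear over $\mathbb{Z}_p$ if and only if $pP'(\mathbf{u},\mathbf{v})\in\mathcal{C}$ for all $\mathbf{u},\mathbf{v}\in\mathcal{C}$.
   Context: The Gray map $\phi:\mathbb{Z}_{p^2}\to\mathbb{Z}_p^p$ is $\phi(\theta)=\theta''(1,\ldots,1)+\theta'(0,1,\ldots,p-1)$ where $\theta=\theta''p+\theta'$, $\theta',\theta''\in\{0,\ldots,p-1\}$; and $\Phi(\mathbf{x},\mathbf{y})=(\mathbf{x},\phi(y_1),\ldots,\phi(y_\beta))$ for $\mathbf{x}\in\mathbb{Z}_p^\alpha$, $\mathbf{y}\in\mathbb{Z}_{p^2}^\beta$. For $\mathbf{u}=(u_1,\ldots,u_{\alpha+\beta}),\mathbf{v}=(v_1,\ldots,v_{\alpha+\beta})\in\mathbb{Z}_p^\alpha\times\mathbb{Z}_{p^2}^\beta$, write $u_i=u_i''p+u_i'$, $v_i=v_i''p+v_i'$ ($u_i',v_i'\in\{0,\ldots,p-1\}$) for $i>\alpha$. Then $pP'(\mathbf{u},\mathbf{v})\in\mathbb{Z}_p^\alpha\times\mathbb{Z}_{p^2}^\beta$ is the vector whose first $\alpha$ coordinates are $0$ and whose coordinate $i>\alpha$ equals $p(p-1)\in\mathbb{Z}_{p^2}$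 if $u_i'+v_i'\ge p$ and $0$ otherwise. *)

theory Defs
  imports "HOL-Computational_Algebra.Primes"
begin

text \<open>Vectors over Z_m of length n are represented as lists of naturals of length n
  with entries in {0..m-1}.\<close>
definition zvecs :: "nat \<Rightarrow> nat \<Rightarrow> nat list set" where
  "zvecs m n = {x. length x = n \<and> (\<forall>a\<in>set x. a < m)}"

definition add_mod :: "nat \<Rightarrow> nat list \<Rightarrow> nat list \<Rightarrow> nat list" where
  "add_mod m x y = map2 (\<lambda>a b. (a + b) mod m) x y"

definition neg_mod :: "nat \<Rightarrow> nat list \<Rightarrow> nat list" where
  "neg_mod m x = map (\<lambda>a. (m - a) mod m) x"

definition smult_mod :: "nat \<Rightarrow> nat \<Rightarrow> nat list \<Rightarrow> nat list" where
  "smult_mod m c x = map (\<lambda>a. (c * a) mod m) x"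

definition ambient :: "nat \<Rightarrow> nat \<Rightarrow> nat \<Rightarrow> (nat list \<times> nat list) set" where
  "ambient p \<alpha> \<beta> = zvecs p \<alpha> \<times> zvecs (p^2) \<beta>"

definition mix_add :: "nat \<Rightarrow> nat list \<times> nat list \<Rightarrow> nat list \<times> nat list \<Rightarrow> nat list \<times> nat list" where
  "mix_add p u v = (add_mod p (fst u) (fst v), add_mod (p^2) (snd u) (snd v))"

definition mix_neg :: "nat \<Rightarrow> nat list \<times> nat list \<Rightarrow> nat list \<times> nat list" where
  "mix_neg p u = (neg_mod p (fst u), neg_mod (p^2) (snd u))"

definition additive_code :: "nat \<Rightarrow> nat \<Rightarrow> nat \<Rightarrow> (nat list \<times> nat list) set \<Rightarrow> bool" where
  "additive_code p \<alpha> \<beta> C \<longleftrightarrow> C \<subseteq> ambient p \<alpha> \<beta> \<and>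
     (replicate \<alpha> 0, replicate \<beta> 0) \<in> C \<and>
     (\<forall>u\<in>C. \<forall>v\<in>C. mix_add p u v \<in> C) \<and>
     (\<forall>u\<in>C. mix_neg p u \<in> C)"

text \<open>Gray map phi(theta) = theta''(1,...,1) + theta'(0,1,...,p-1) over Z_p,
  where theta = theta'' p + theta'.\<close>
definition gray :: "nat \<Rightarrow> nat \<Rightarrow> nat list" where
  "gray p \<theta> = map (\<lambda>i. (\<theta> div p + (\<theta> mod p) * i) mod p) [0..<p]"

definition Phi :: "nat \<Rightarrow> nat list \<times> nat list \<Rightarrow> nat list" where
  "Phi p u = fst u @ concat (map (gray p) (snd u))"

definition linear_code :: "nat \<Rightarrow> nat \<Rightarrow> nat list set \<Rightarrow> bool" where
  "linear_code p n C \<longleftrightarrow> C \<subseteq> zvecs p n \<and> replicate n 0 \<in> C \<and>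
     (\<forall>x\<in>C. \<forall>y\<in>C. add_mod p x y \<in> C) \<and>
     (\<forall>c<p. \<forall>x\<in>C. smult_mod p c x \<in> C)"

definition pP' :: "nat \<Rightarrow> nat list \<times> nat list \<Rightarrow> nat list \<times> nat list \<Rightarrow> nat list \<times> nat list" where
  "pP' p u v = (replicate (length (fst u)) 0,
     map2 (\<lambda>a b. if a mod p + b mod p \<ge> p then p * (p - 1) else 0) (snd u) (snd v))"

end

theory Submission
  imports Defs "HOL-Number_Theory.Cong"
begin

text \<open>The Gray map is additive in the digit pair (theta'', theta'), but adding two elements of
  Z_{p^2} carries p into theta'' whenever u_i' + v_i' >= p; adding p(p-1) = -p undoes that carry,
  so Phi(u) + Phi(v) = Phi(u + v + pP'(u,v)). Since Phi is injective and the code is a group,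
  Phi(C) is closed under addition iff every pP'(u,v) lies in C. Closure under addition already
  makes Phi(C) a Z_p-subspace, as scalar multiples are iterated sums.\<close>

lemma length_add_mod [simp]: "length (add_mod m x y) = min (length x) (length y)"
  by (simp add: add_mod_def)

lemma nth_add_mod [simp]:
  "i < length x \<Longrightarrow> i < length y \<Longrightarrow> add_mod m x y ! i = (x ! i + y ! i) mod m"
  by (simp add: add_mod_def)

lemma add_mod_Cons [simp]: "add_mod m (a # x) (b # y) = (a + b) mod m # add_mod m x y"
  by (simp add: add_mod_def)

lemma add_mod_append:
  "length x1 = length y1 \<Longrightarrow> add_mod m (x1 @ x2) (y1 @ y2) = add_mod m x1 y1 @ add_mod m x2 y2"
  by (simp add: add_mod_def)

lemma length_neg_mod [simp]: "length (neg_mod m x) = length x"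
  by (simp add: neg_mod_def)

lemma nth_neg_mod [simp]: "i < length x \<Longrightarrow> neg_mod m x ! i = (m - x ! i) mod m"
  by (simp add: neg_mod_def)

lemma length_smult_mod [simp]: "length (smult_mod m c x) = length x"
  by (simp add: smult_mod_def)

lemma nth_smult_mod [simp]: "i < length x \<Longrightarrow> smult_mod m c x ! i = (c * x ! i) mod m"
  by (simp add: smult_mod_def)

lemma zvecs_iff: "x \<in> zvecs m n \<longleftrightarrow> length x = n \<and> (\<forall>i<n. x ! i < m)"
  by (auto simp: zvecs_def all_set_conv_all_nth)

lemma add_mod_in_zvecs: "m > 0 \<Longrightarrow> x \<in> zvecs m n \<Longrightarrow> y \<in> zvecs m n \<Longrightarrow> add_mod m x y \<in> zvecs m n"
  by (simp add: zvecs_iff)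

lemma add_mod_add_mod_neg_mod:
  assumes "x \<in> zvecs m n" "y \<in> zvecs m n"
  shows "add_mod m (add_mod m x y) (neg_mod m x) = y"
proof (rule nth_equalityI)
  fix i assume "i < length (add_mod m (add_mod m x y) (neg_mod m x))"
  then have i: "i < n" and "x ! i < m" "y ! i < m" using assms by (auto simp: zvecs_iff)
  then have "((x ! i + y ! i) mod m + (m - x ! i) mod m) mod m = (y ! i + m) mod m"
    by (simp add: mod_add_eq)
  also have "\<dots> = y ! i" using \<open>y ! i < m\<close> by simp
  finally show "add_mod m (add_mod m x y) (neg_mod m x) ! i = y ! i"
    using assms i by (simp add: zvecs_iff)
qed (use assms in \<open>simp add: zvecs_iff\<close>)

lemma smult_mod_0: "smult_mod m 0 x = replicate (length x) 0"
  by (simp add: smult_mod_def map_replicate_const)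

lemma smult_mod_Suc: "smult_mod m (Suc c) x = add_mod m x (smult_mod m c x)"
  by (rule nth_equalityI) (simp_all add: mod_add_right_eq)

lemma linear_code_iff_add_closed:
  assumes "C \<subseteq> zvecs p n" and "replicate n 0 \<in> C"
  shows "linear_code p n C \<longleftrightarrow> (\<forall>x\<in>C. \<forall>y\<in>C. add_mod p x y \<in> C)"
proof
  assume add: "\<forall>x\<in>C. \<forall>y\<in>C. add_mod p x y \<in> C"
  have "smult_mod p c x \<in> C" if "x \<in> C" for c x
  proof (induction c)
    case 0
    show ?case using assms \<open>x \<in> C\<close> by (auto simp: smult_mod_0 zvecs_def)
  next
    case (Suc c)
    then show ?case using add \<open>x \<in> C\<close> by (simp add: smult_mod_Suc)
  qed
  with assms add show "linear_code p n C" by (simp add: linear_code_def)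
qed (simp add: linear_code_def)

lemma length_gray [simp]: "length (gray p t) = p"
  by (simp add: gray_def)

lemma nth_gray [simp]: "i < p \<Longrightarrow> gray p t ! i = (t div p + t mod p * i) mod p"
  by (simp add: gray_def)

lemma nth_gray_digits:
  assumes "r < p" "i < p"
  shows "gray p (q * p + r) ! i = (q + r * i) mod p"
  using assms by simp

lemma gray_add:
  assumes "p > 0"
  shows "add_mod p (gray p a) (gray p b)
    = gray p (a + b + (if p \<le> a mod p + b mod p then p * (p - 1) else 0))"
proof (rule nth_equalityI)
  fix i assume "i < length (add_mod p (gray p a) (gray p b))"
  then have i: "i < p" by simp
  have a: "a = a div p * p + a mod p" and b: "b = b div p * p + b mod p" by simp_all
  have "add_mod p (gray p a) (gray p b) ! i
      = (a div p + b div p + (a mod p + b mod p) * i) mod p"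
    using i by (simp add: mod_add_eq algebra_simps)
  also have "\<dots> = gray p (a + b + (if p \<le> a mod p + b mod p then p * (p - 1) else 0)) ! i"
  proof (cases "p \<le> a mod p + b mod p")
    case True
    then obtain s where s: "a mod p + b mod p = s + p" by (metis le_add_diff_inverse2)
    have "s < p" using s assms by (metis add_less_cancel_right mod_less_divisor add_less_mono)
    have "p * (p - 1) + p = p * p" using assms by (cases p) auto
    then have "a + b + p * (p - 1) = a div p * p + b div p * p + p * p + s"
      using a b s by linarith
    also have "\<dots> = (a div p + b div p + p) * p + s" by (simp add: algebra_simps)
    finally have "a + b + p * (p - 1) = (a div p + b div p + p) * p + s" .
    then have "gray p (a + b + p * (p - 1)) ! i = (a div p + b div p + p + s * i) mod p"
      using nth_gray_digits[OF \<open>s < p\<close> i] by simp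
    also have "\<dots> = (a div p + b div p + s * i) mod p"
      using mod_add_self2[of "a div p + b div p + s * i" p] by (simp add: algebra_simps)
    also have "\<dots> = (a div p + b div p + (a mod p + b mod p) * i) mod p"
      using mod_mult_self1[of "a div p + b div p + s * i" i p] by (simp add: s algebra_simps)
    finally show ?thesis using True by simp
  next
    case False
    then have "a + b = (a div p + b div p) * p + (a mod p + b mod p)"
      using a b by (simp add: algebra_simps)
    then have "gray p (a + b) ! i = (a div p + b div p + (a mod p + b mod p) * i) mod p"
      using nth_gray_digits[OF _ i, of "a mod p + b mod p" "a div p + b div p"] False by simp
    then show ?thesis using False by simp
  qed
  finally show "add_mod p (gray p a) (gray p b) ! i
    = gray p (a + b + (if p \<le> a mod p + b mod p then p * (p - 1) else 0)) ! i" .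
qed simp

lemma gray_mod_square:
  assumes "p > 0"
  shows "gray p (t mod p^2) = gray p t"
proof -
  have t: "t mod p^2 = t mod p + p * (t div p mod p)"
    by (simp add: power2_eq_square mod_mult2_eq)
  have "t mod p^2 mod p = t mod p" and "t mod p^2 div p = t div p mod p"
    using assms unfolding t by simp_all
  then show ?thesis by (simp add: gray_def mod_add_left_eq)
qed

lemma gray_eqI: "p > 0 \<Longrightarrow> s mod p^2 = t mod p^2 \<Longrightarrow> gray p s = gray p t"
  by (metis gray_mod_square)

lemma inj_on_gray:
  assumes "p \<ge> 2"
  shows "inj_on (gray p) {..<p^2}"
proof (rule inj_onI)
  fix a b assume "a \<in> {..<p^2}" "b \<in> {..<p^2}" and ab: "gray p a = gray p b"
  then have "a div p < p" "b div p < p"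
    by (simp_all add: less_mult_imp_div_less power2_eq_square)
  moreover have "gray p a ! 0 = gray p b ! 0" and "gray p a ! 1 = gray p b ! 1"
    using ab by simp_all
  ultimately have d: "a div p = b div p"
    and "(a div p + a mod p) mod p = (b div p + b mod p) mod p"
    using assms by simp_all
  then have "[a div p + a mod p = a div p + b mod p] (mod p)" by (simp add: cong_def)
  then have "a mod p = b mod p" using cong_add_lcancel_nat unfolding cong_def by simp
  with d show "a = b" by (metis div_mult_mod_eq)
qed

lemma inj_on_concat_map:
  assumes inj: "inj_on f {..<m}" and len: "\<And>x. x < m \<Longrightarrow> length (f x) = k"
  shows "inj_on (\<lambda>xs. concat (map f xs)) (zvecs m n)"
proof -
  have eq: "xs = ys"
    if "length xs = length ys" "set xs \<subseteq> {..<m}" "set ys \<subseteq> {..<m}"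
      and "concat (map f xs) = concat (map f ys)" for xs ys
    using that
  proof (induction xs ys rule: list_induct2)
    case (Cons x xs y ys)
    then have "f x = f y" and "concat (map f xs) = concat (map f ys)"
      using len by (auto simp: append_eq_append_conv)
    with Cons inj show ?case by (auto dest: inj_onD)
  qed simp
  show ?thesis by (rule inj_onI, rule eq) (auto simp: zvecs_def)
qed

lemma length_concat_gray: "length (concat (map (gray p) ys)) = p * length ys"
  by (induction ys) auto

lemma concat_gray_add:
  assumes "p > 0" and "length xs = length ys"
  shows "add_mod p (concat (map (gray p) xs)) (concat (map (gray p) ys))
    = concat (map (gray p) (add_mod (p^2) (add_mod (p^2) xs ys)
        (map2 (\<lambda>a b. if p \<le> a mod p + b mod p then p * (p - 1) else 0) xs ys)))"
  using assms(2)
proof (induction xs ys rule: list_induct2)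
  case (Cons a xs b ys)
  have "add_mod p (gray p a) (gray p b)
      = gray p (((a + b) mod p^2 + (if p \<le> a mod p + b mod p then p * (p - 1) else 0)) mod p^2)"
    unfolding gray_add[OF assms(1)] using assms(1) by (intro gray_eqI) (simp_all add: mod_add_left_eq)
  with Cons show ?case by (simp add: add_mod_append)
qed (simp add: add_mod_def)

lemma Phi_in_zvecs:
  assumes "p > 0" and "u \<in> ambient p \<alpha> \<beta>"
  shows "Phi p u \<in> zvecs p (\<alpha> + p * \<beta>)"
  using assms by (auto simp: Phi_def ambient_def zvecs_def length_concat_gray gray_def)

lemma Phi_zero: "Phi p (replicate \<alpha> 0, replicate \<beta> 0) = replicate (\<alpha> + p * \<beta>) 0"
proof -
  have "concat (map (gray p) (replicate \<beta> 0)) = replicate (p * \<beta>) 0"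
    by (induction \<beta>) (simp_all add: gray_def map_replicate_const replicate_add)
  then show ?thesis by (simp add: Phi_def replicate_add)
qed

lemma inj_on_Phi:
  assumes "p \<ge> 2"
  shows "inj_on (Phi p) (ambient p \<alpha> \<beta>)"
proof (rule inj_onI)
  fix u v assume u: "u \<in> ambient p \<alpha> \<beta>" and v: "v \<in> ambient p \<alpha> \<beta>" and "Phi p u = Phi p v"
  moreover have "length (fst u) = length (fst v)"
    using u v by (simp add: ambient_def zvecs_def mem_Times_iff)
  ultimately have "fst u = fst v"
    and "concat (map (gray p) (snd u)) = concat (map (gray p) (snd v))"
    by (simp_all add: Phi_def)
  moreover have "inj_on (\<lambda>xs. concat (map (gray p) xs)) (zvecs (p^2) \<beta>)"
    using inj_on_gray[OF assms] by (rule inj_on_concat_map) simp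
  ultimately show "u = v"
    using u v by (auto simp: ambient_def mem_Times_iff prod_eq_iff dest: inj_onD)
qed

lemma Phi_add:
  assumes "p > 0" and "length (fst u) = length (fst v)" and "length (snd u) = length (snd v)"
  shows "add_mod p (Phi p u) (Phi p v) = Phi p (mix_add p (mix_add p u v) (pP' p u v))"
proof -
  have "add_mod p (add_mod p (fst u) (fst v)) (replicate (length (fst u)) 0) = add_mod p (fst u) (fst v)"
    using assms(2) by (intro nth_equalityI) simp_all
  then show ?thesis
    using assms by (simp add: Phi_def mix_add_def pP'_def add_mod_append concat_gray_add length_concat_gray)
qed

lemma mix_add_in_ambient:
  "p > 0 \<Longrightarrow> u \<in> ambient p \<alpha> \<beta> \<Longrightarrow> v \<in> ambient p \<alpha> \<beta> \<Longrightarrow> mix_add p u v \<in> ambient p \<alpha> \<beta>"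
  by (auto simp: ambient_def mix_add_def add_mod_in_zvecs)

lemma pP'_in_ambient:
  assumes "p > 0" and "u \<in> ambient p \<alpha> \<beta>" and "v \<in> ambient p \<alpha> \<beta>"
  shows "pP' p u v \<in> ambient p \<alpha> \<beta>"
proof -
  have "p * (p - 1) < p^2" using assms(1) by (simp add: power2_eq_square)
  with assms show ?thesis by (auto simp: ambient_def zvecs_iff pP'_def)
qed

lemma additive_code_mix_add_iff:
  assumes C: "additive_code p \<alpha> \<beta> C" and "s \<in> C" and "x \<in> ambient p \<alpha> \<beta>"
  shows "mix_add p s x \<in> C \<longleftrightarrow> x \<in> C"
proof
  have "s \<in> ambient p \<alpha> \<beta>" using C \<open>s \<in> C\<close> by (auto simp: additive_code_def)
  with \<open>x \<in> ambient p \<alpha> \<beta>\<close> have "mix_add p (mix_add p s x) (mix_neg p s) = x"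
    by (auto simp: ambient_def mix_add_def mix_neg_def add_mod_add_mod_neg_mod prod_eq_iff)
  moreover assume "mix_add p s x \<in> C"
  then have "mix_add p (mix_add p s x) (mix_neg p s) \<in> C"
    using assms by (simp add: additive_code_def)
  ultimately show "x \<in> C" by simp
qed (use assms in \<open>simp add: additive_code_def\<close>)

lemma Phi_image_add_closed_iff:
  assumes "p \<ge> 2" and C: "additive_code p \<alpha> \<beta> C"
  shows "(\<forall>u\<in>C. \<forall>v\<in>C. add_mod p (Phi p u) (Phi p v) \<in> Phi p ` C) \<longleftrightarrow> (\<forall>u\<in>C. \<forall>v\<in>C. pP' p u v \<in> C)"
proof -
  have p: "p > 0" using assms(1) by simp
  have CA: "C \<subseteq> ambient p \<alpha> \<beta>" using C by (simp add: additive_code_def)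
  have "add_mod p (Phi p u) (Phi p v) \<in> Phi p ` C \<longleftrightarrow> pP' p u v \<in> C"
    if "u \<in> C" and "v \<in> C" for u v
  proof -
    have u: "u \<in> ambient p \<alpha> \<beta>" and v: "v \<in> ambient p \<alpha> \<beta>" using that CA by auto
    have uv: "mix_add p u v \<in> C" using C that by (simp add: additive_code_def)
    have P: "pP' p u v \<in> ambient p \<alpha> \<beta>" using pP'_in_ambient[OF p u v] .
    have "add_mod p (Phi p u) (Phi p v) = Phi p (mix_add p (mix_add p u v) (pP' p u v))"
      using u v p by (intro Phi_add) (simp_all add: ambient_def zvecs_def mem_Times_iff)
    also have "\<dots> \<in> Phi p ` C \<longleftrightarrow> mix_add p (mix_add p u v) (pP' p u v) \<in> C"
      using inj_on_Phi[OF assms(1)] mix_add_in_ambient[OF p mix_add_in_ambient[OF p u v] P] CA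
      by (rule inj_on_image_mem_iff)
    also have "\<dots> \<longleftrightarrow> pP' p u v \<in> C" using additive_code_mix_add_iff[OF C uv P] .
    finally show ?thesis .
  qed
  then show ?thesis by auto
qed

theorem lemma4:
  fixes p \<alpha> \<beta> :: nat and C :: "(nat list \<times> nat list) set"
  assumes "prime p" and "p > 2" and "additive_code p \<alpha> \<beta> C"
  shows "linear_code p (\<alpha> + p * \<beta>) (Phi p ` C) \<longleftrightarrow> (\<forall>u\<in>C. \<forall>v\<in>C. pP' p u v \<in> C)"
proof -
  have p: "p \<ge> 2" using assms(2) by simp
  have "C \<subseteq> ambient p \<alpha> \<beta>" and "(replicate \<alpha> 0, replicate \<beta> 0) \<in> C"
    using assms(3) by (simp_all add: additive_code_def)
  then have "Phi p ` C \<subseteq> zvecs p (\<alpha> + p * \<beta>)" and "replicate (\<alpha> + p * \<beta>) 0 \<in> Phi p ` C"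
    using Phi_in_zvecs[of p] p by (auto simp flip: Phi_zero)
  then show ?thesis
    by (simp add: linear_code_iff_add_closed Phi_image_add_closed_iff[OF p assms(3)])
qed

end
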